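(* Let $(M,\varphi,\xi,\eta,g)$ be a $3$-dimensional $f$-Kenmotsu manifold and let $\gamma(s):I\to M$ be a non-geodesic, arc-length parametrized Frenet curve with Frenet frame $\{T,N,B\}$, curvature $k_1=k_1(s)$ and torsion $k_2=k_2(s)$. Put $A:=\frac{r}{2}+2(f^2+f')$ and $\Lambda:=\frac{r}{2}+3(f^2+f')$. Then $\gamma$ is a triharmonic curve if and only if \begin{align*} &k_1k_1'''+2k_1'k_1''-2k_1^3k_1'-k_2^2k_1k_1'-k_1^2k_2k_2'=0,\\ &k_1^{(4)}-10k_1^2k_1''-6k_2^2k_1''-4k_1k_2k_2''-15k_1(k_1')^2-12k_2k_2'k_1'-3k_1(k_2')^2+k_1^5+k_1k_2^4+2k_1^3k_2^2\\ &\quad+(k_1''-2k_1^3-k_1k_2^2)\big(A-\Lambda(\eta(T)^2+\eta(N)^2)\big)-\big(k_1^2k_2\eta(T)+(2k_2k_1'+k_1k_2')\eta(N)\big)\Lambda\,\eta(B)=0,\\ &4k_2k_1'''+6k_1''k_2'+4k_1'k_2''-9k_1^2k_2k_1'-4k_2^3k_1'-6k_1k_2^2k_2'-k_2'k_1^3+k_1k_2'''\\ &\quad+(2k_1'k_2+k_1k_2')\big(A-\Lambda(\eta(T)^2+\eta(B)^2)\big)+\big(k_1^2k_2\eta(T)-(k_1''-2k_1^3-k_1k_2^2)\eta(B)\big)\Lambda\,\eta(N)=0. \end{align*}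
   Context: An almost contact metric manifold $(M^{2n+1},\varphi,\xi,\eta,g)$ has a $(1,1)$-tensor $\varphi$, vector field $\xi$, $1$-form $\eta$ and Riemannian metric $g$ with $\varphi^2=-I+\eta\otimes\xi$, $\eta(\xi)=1$, $\varphi\xi=0$, $\eta\circ\varphi=0$, $\eta(X)=g(X,\xi)$, $g(\varphi X,\varphi Y)=g(X,Y)-\eta(X)\eta(Y)$. It is an $f$-Kenmotsu manifold if the Levi-Civita connection satisfies $(\nabla_X\varphi)Y=f(g(\varphi X,Y)\xi-\eta(Y)\varphi X)$ and $\nabla_X\xi=f(X-\eta(X)\xi)$ for a smooth function $f$ with $df\wedge\eta=0$. In dimension 3 its curvature tensor is $R(X,Y)Z=(\frac r2+2(f^2+f'))(g(Y,Z)X-g(X,Z)Y)-(\frac r2+3(f^2+f'))(g(Y,Z)\eta(X)\xi-g(X,Z)\eta(Y)\xi-\eta(X)\eta(Z)Y+\eta(Y)\eta(Z)X)$, where $r$ is the scalar curvature and $f'$ denotes the derivative of $f$; along the curve $f,f',r$ are regarded as functions of the arc-length $s$. A Frenet curve satisfies $\nabla_TT=k_1N$, $\nabla_TN=-k_1T+k_2B$, $\nabla_TB=-k_2N$, $T=\gamma'$. An arc-length parametrized curve is triharmonic if $\tau_3(\gamma):=\nabla_T^5T+R(\nabla_T^3T,T)T-R(\nabla_T^2T,\nabla_TT)T=0$. Primes on $k_1,k_2$ denote derivatives in $s$. *)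

theory Defs
  imports "HOL-Analysis.Analysis"
begin

text \<open>Vector fields along the curve are represented in a parallel orthonormal frame
  along the curve, i.e. as functions from the parameter interval to real^3 with the
  induced metric being the dot product; the covariant derivative along the curve
  nabla_T then becomes the ordinary derivative.\<close>

definition vd :: "(real \<Rightarrow> real^3) \<Rightarrow> real \<Rightarrow> real^3" where
  "vd V = (\<lambda>t. vector_derivative V (at t))"

text \<open>Curvature tensor of a 3-dimensional f-Kenmotsu manifold at a point with
  scalar curvature r, function value f, derivative value fp and Reeb field xi.\<close>
definition kenmotsu_curv ::
  "real \<Rightarrow> real \<Rightarrow> real \<Rightarrow> real^3 \<Rightarrow> real^3 \<Rightarrow> real^3 \<Rightarrow> real^3 \<Rightarrow> real^3" where
  "kenmotsu_curv r f fp xi X Y Z =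
     (r/2 + 2*(f^2 + fp)) *\<^sub>R ((Y \<bullet> Z) *\<^sub>R X - (X \<bullet> Z) *\<^sub>R Y)
   - (r/2 + 3*(f^2 + fp)) *\<^sub>R
       (((Y \<bullet> Z) * (X \<bullet> xi)) *\<^sub>R xi - ((X \<bullet> Z) * (Y \<bullet> xi)) *\<^sub>R xi
        - ((X \<bullet> xi) * (Z \<bullet> xi)) *\<^sub>R Y + ((Y \<bullet> xi) * (Z \<bullet> xi)) *\<^sub>R X)"

definition triharmonic ::
  "real set \<Rightarrow> (real \<Rightarrow> real^3) \<Rightarrow> (real \<Rightarrow> real^3 \<Rightarrow> real^3 \<Rightarrow> real^3 \<Rightarrow> real^3) \<Rightarrow> bool" where
  "triharmonic I T Rm \<longleftrightarrow>
     (\<forall>s\<in>I. (vd^^5) T s + Rm s ((vd^^3) T s) (T s) (T s)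
              - Rm s ((vd^^2) T s) ((vd^^1) T s) (T s) = 0)"

end

theory Submission
  imports Defs
begin

text \<open>By the Frenet equations, every derivative \<open>\<nabla>\<^sub>T\<^sup>j T\<close> is a combination of
  \<open>T, N, B\<close> whose coordinates are polynomials in \<open>k\<^sub>1, k\<^sub>2\<close> and their derivatives, and
  they are obtained one after the other by differentiating the coordinates and rotating the
  frame. Inserting the coordinates of \<open>\<nabla>\<^sub>T T, \<nabla>\<^sub>T\<^sup>2 T, \<nabla>\<^sub>T\<^sup>3 T, \<nabla>\<^sub>T\<^sup>5 T\<close> into the
  curvature tensor of the \<open>f\<close>-Kenmotsu manifold expresses \<open>\<tau>\<^sub>3(\<gamma>)\<close> in the frame as well.
  It vanishes iff its three coordinates do: the \<open>N\<close>- and \<open>B\<close>-coordinates are the second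
  and third equation, and the \<open>T\<close>-coordinate is \<open>-5\<close> times the first one.\<close>

lemma orthonormal_frame_eq_0_iff:
  fixes t n b v :: "real^3"
  assumes "t \<bullet> t = 1" "n \<bullet> n = 1" "b \<bullet> b = 1" "t \<bullet> n = 0" "t \<bullet> b = 0" "n \<bullet> b = 0"
  shows "v = 0 \<longleftrightarrow> v \<bullet> t = 0 \<and> v \<bullet> n = 0 \<and> v \<bullet> b = 0"
proof
  assume v_orth: "v \<bullet> t = 0 \<and> v \<bullet> n = 0 \<and> v \<bullet> b = 0"
  show "v = 0"
  proof (rule ccontr)
    assume "v \<noteq> 0"
    let ?S = "{t, n, b, v}"
    have "pairwise orthogonal ?S"
      using assms v_orth by (auto simp: pairwise_def orthogonal_def inner_commute)
    moreover have "0 \<notin> ?S"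
      using assms \<open>v \<noteq> 0\<close> by auto
    ultimately have "card ?S \<le> DIM(real^3)"
      using pairwise_orthogonal_independent independent_bound by blast
    moreover have "distinct [t, n, b, v]"
      using assms v_orth \<open>v \<noteq> 0\<close> by (auto simp: inner_commute)
    then have "card ?S = 4"
      by auto
    ultimately show False
      by simp
  qed
qed simp

locale frenet_curve =
  fixes I :: "real set" and T N B :: "real \<Rightarrow> real^3" and \<kappa> \<tau> :: "nat \<Rightarrow> real \<Rightarrow> real"
  assumes open_I: "open I"
    and \<kappa>_deriv: "\<And>j s. s \<in> I \<Longrightarrow> (\<kappa> j has_real_derivative \<kappa> (Suc j) s) (at s)"
    and \<tau>_deriv: "\<And>j s. s \<in> I \<Longrightarrow> (\<tau> j has_real_derivative \<tau> (Suc j) s) (at s)"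
    and frenet_T: "\<And>s. s \<in> I \<Longrightarrow> (T has_vector_derivative \<kappa> 0 s *\<^sub>R N s) (at s)"
    and frenet_N: "\<And>s. s \<in> I \<Longrightarrow> (N has_vector_derivative (- \<kappa> 0 s *\<^sub>R T s + \<tau> 0 s *\<^sub>R B s)) (at s)"
    and frenet_B: "\<And>s. s \<in> I \<Longrightarrow> (B has_vector_derivative (- \<tau> 0 s *\<^sub>R N s)) (at s)"
begin

text \<open>The Frenet equations in coordinates,
  \<open>(a T + b N + c B)' = (a' - k\<^sub>1 b) T + (b' + k\<^sub>1 a - k\<^sub>2 c) N + (c' + k\<^sub>2 b) B\<close>,
  with the derivatives of the coordinates solved for the new coordinates, so that the
  hypotheses can be discharged by \<open>derivative_eq_intros\<close> for given target coordinates.\<close>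

lemma vd_frame_coordinates:
  assumes s: "s \<in> I"
    and V: "\<And>t. t \<in> I \<Longrightarrow> V t = a t *\<^sub>R T t + b t *\<^sub>R N t + c t *\<^sub>R B t"
    and "(a has_real_derivative \<alpha> + \<kappa> 0 s * b s) (at s)"
    and "(b has_real_derivative \<beta> - \<kappa> 0 s * a s + \<tau> 0 s * c s) (at s)"
    and "(c has_real_derivative \<gamma> - \<tau> 0 s * b s) (at s)"
  shows "vd V s = \<alpha> *\<^sub>R T s + \<beta> *\<^sub>R N s + \<gamma> *\<^sub>R B s"
proof -
  have "((\<lambda>t. a t *\<^sub>R T t + b t *\<^sub>R N t + c t *\<^sub>R B t) has_vector_derivative
      (a s *\<^sub>R (\<kappa> 0 s *\<^sub>R N s) + (\<alpha> + \<kappa> 0 s * b s) *\<^sub>R T s)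
      + (b s *\<^sub>R (- \<kappa> 0 s *\<^sub>R T s + \<tau> 0 s *\<^sub>R B s) + (\<beta> - \<kappa> 0 s * a s + \<tau> 0 s * c s) *\<^sub>R N s)
      + (c s *\<^sub>R (- \<tau> 0 s *\<^sub>R N s) + (\<gamma> - \<tau> 0 s * b s) *\<^sub>R B s)) (at s)"
    using assms(3-5) frenet_T[OF s] frenet_N[OF s] frenet_B[OF s]
    by (intro has_vector_derivative_add has_vector_derivative_scaleR)
  then have "((\<lambda>t. a t *\<^sub>R T t + b t *\<^sub>R N t + c t *\<^sub>R B t) has_vector_derivative
      \<alpha> *\<^sub>R T s + \<beta> *\<^sub>R N s + \<gamma> *\<^sub>R B s) (at s)"
    by (rule has_vector_derivative_eq_rhs) (simp add: algebra_simps)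
  then have "(V has_vector_derivative \<alpha> *\<^sub>R T s + \<beta> *\<^sub>R N s + \<gamma> *\<^sub>R B s) (at s)"
    by (rule has_vector_derivative_transform_within_open[OF _ open_I s]) (simp add: V)
  then show ?thesis
    unfolding vd_def by (rule vector_derivative_at)
qed

lemma \<kappa>_deriv_eq: "s \<in> I \<Longrightarrow> D = \<kappa> (j + 1) s \<Longrightarrow> (\<kappa> j has_real_derivative D) (at s)"
  using \<kappa>_deriv by simp

lemma \<tau>_deriv_eq: "s \<in> I \<Longrightarrow> D = \<tau> (j + 1) s \<Longrightarrow> (\<tau> j has_real_derivative D) (at s)"
  using \<tau>_deriv by simp

lemma vd_T_1:
  assumes s: "s \<in> I"
  shows "(vd^^1) T s = 0 *\<^sub>R T s + \<kappa> 0 s *\<^sub>R N s + 0 *\<^sub>R B s"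
    (is "_ = ?coordinates")
proof -
  have T_coordinates: "T t = 1 *\<^sub>R T t + 0 *\<^sub>R N t + 0 *\<^sub>R B t" for t
    by simp
  have "(vd^^1) T s = vd T s"
    by (simp add: numeral_eq_Suc)
  also have "\<dots> = ?coordinates"
    by (rule vd_frame_coordinates[OF s T_coordinates];
        (assumption | rule \<kappa>_deriv_eq \<tau>_deriv_eq s derivative_eq_intros refl)+;
        simp add: algebra_simps eval_nat_numeral)
  finally show ?thesis .
qed

lemma vd_T_2:
  assumes s: "s \<in> I"
  shows "(vd^^2) T s = - (\<kappa> 0 s^2) *\<^sub>R T s + \<kappa> 1 s *\<^sub>R N s + (\<kappa> 0 s * \<tau> 0 s) *\<^sub>R B s"
    (is "_ = ?coordinates")
proof -
  have "(vd^^2) T s = vd ((vd^^1) T) s"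
    by (simp add: numeral_eq_Suc)
  also have "\<dots> = ?coordinates"
    by (rule vd_frame_coordinates[OF s vd_T_1];
        (assumption | rule \<kappa>_deriv_eq \<tau>_deriv_eq s derivative_eq_intros refl)+;
        simp add: algebra_simps eval_nat_numeral)
  finally show ?thesis .
qed

lemma vd_T_3:
  assumes s: "s \<in> I"
  shows "(vd^^3) T s = (-3 * \<kappa> 0 s * \<kappa> 1 s) *\<^sub>R T s
      + (\<kappa> 2 s - \<kappa> 0 s * \<tau> 0 s^2 - \<kappa> 0 s^3) *\<^sub>R N s
      + (2 * \<kappa> 1 s * \<tau> 0 s + \<kappa> 0 s * \<tau> 1 s) *\<^sub>R B s"
    (is "_ = ?coordinates")
proof -
  have "(vd^^3) T s = vd ((vd^^2) T) s"
    by (simp add: numeral_eq_Suc)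
  also have "\<dots> = ?coordinates"
    by (rule vd_frame_coordinates[OF s vd_T_2];
        (assumption | rule \<kappa>_deriv_eq \<tau>_deriv_eq s derivative_eq_intros refl)+;
        simp add: algebra_simps eval_nat_numeral)
  finally show ?thesis .
qed

lemma vd_T_4:
  assumes s: "s \<in> I"
  shows "(vd^^4) T s =
        (-3*\<kappa> 1 s^2 - 4*\<kappa> 0 s*\<kappa> 2 s + \<kappa> 0 s^2*\<tau> 0 s^2 + \<kappa> 0 s^4) *\<^sub>R T s
      + (\<kappa> 3 s - 3*\<kappa> 1 s*\<tau> 0 s^2 - 3*\<kappa> 0 s*\<tau> 0 s*\<tau> 1 s - 6*\<kappa> 0 s^2*\<kappa> 1 s) *\<^sub>R N s
      + (3*\<kappa> 2 s*\<tau> 0 s + 3*\<kappa> 1 s*\<tau> 1 s + \<kappa> 0 s*\<tau> 2 s - \<kappa> 0 s*\<tau> 0 s^3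
         - \<kappa> 0 s^3*\<tau> 0 s) *\<^sub>R B s"
    (is "_ = ?coordinates")
proof -
  have "(vd^^4) T s = vd ((vd^^3) T) s"
    by (simp add: numeral_eq_Suc)
  also have "\<dots> = ?coordinates"
    by (rule vd_frame_coordinates[OF s vd_T_3];
        (assumption | rule \<kappa>_deriv_eq \<tau>_deriv_eq s derivative_eq_intros refl)+;
        simp add: algebra_simps eval_nat_numeral)
  finally show ?thesis .
qed

lemma vd_T_5:
  assumes s: "s \<in> I"
  shows "(vd^^5) T s =
        (-10*\<kappa> 1 s*\<kappa> 2 s - 5*\<kappa> 0 s*\<kappa> 3 s + 5*\<kappa> 0 s*\<kappa> 1 s*\<tau> 0 s^2
         + 5*\<kappa> 0 s^2*\<tau> 0 s*\<tau> 1 s + 10*\<kappa> 0 s^3*\<kappa> 1 s) *\<^sub>R T s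
      + (\<kappa> 4 s - 6*\<kappa> 2 s*\<tau> 0 s^2 - 12*\<kappa> 1 s*\<tau> 0 s*\<tau> 1 s - 3*\<kappa> 0 s*\<tau> 1 s^2
         - 4*\<kappa> 0 s*\<tau> 0 s*\<tau> 2 s + \<kappa> 0 s*\<tau> 0 s^4 - 15*\<kappa> 0 s*\<kappa> 1 s^2
         - 10*\<kappa> 0 s^2*\<kappa> 2 s + 2*\<kappa> 0 s^3*\<tau> 0 s^2 + \<kappa> 0 s^5) *\<^sub>R N s
      + (4*\<kappa> 3 s*\<tau> 0 s + 6*\<kappa> 2 s*\<tau> 1 s + 4*\<kappa> 1 s*\<tau> 2 s - 4*\<kappa> 1 s*\<tau> 0 s^3
         + \<kappa> 0 s*\<tau> 3 s - 6*\<kappa> 0 s*\<tau> 0 s^2*\<tau> 1 s - 9*\<kappa> 0 s^2*\<kappa> 1 s*\<tau> 0 s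
         - \<kappa> 0 s^3*\<tau> 1 s) *\<^sub>R B s"
    (is "_ = ?coordinates")
proof -
  have "(vd^^5) T s = vd ((vd^^4) T) s"
    by (simp add: numeral_eq_Suc)
  also have "\<dots> = ?coordinates"
    by (rule vd_frame_coordinates[OF s vd_T_4];
        (assumption | rule \<kappa>_deriv_eq \<tau>_deriv_eq s derivative_eq_intros refl)+;
        simp add: algebra_simps eval_nat_numeral)
  finally show ?thesis .
qed

end

text \<open>\<open>V1, V2, V3, V5\<close> are the frame coordinates of \<open>\<nabla>\<^sub>T T, \<nabla>\<^sub>T\<^sup>2 T, \<nabla>\<^sub>T\<^sup>3 T, \<nabla>\<^sub>T\<^sup>5 T\<close>
  from \<open>vd_T_1\<close>, \<open>vd_T_2\<close>, \<open>vd_T_3\<close>, \<open>vd_T_5\<close>, with \<open>x\<^sub>j = \<kappa> j s\<close> and \<open>y\<^sub>j = \<tau> j s\<close>.\<close>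

lemma kenmotsu_tension3_eq_0_iff:
  fixes t n b xi :: "real^3" and x x1 x2 x3 x4 y y1 y2 y3 r f fp :: real
  assumes orthonormal: "t \<bullet> t = 1" "n \<bullet> n = 1" "b \<bullet> b = 1" "t \<bullet> n = 0" "t \<bullet> b = 0" "n \<bullet> b = 0"
  defines "V1 \<equiv> 0 *\<^sub>R t + x *\<^sub>R n + 0 *\<^sub>R b"
    and "V2 \<equiv> (- (x^2)) *\<^sub>R t + x1 *\<^sub>R n + (x * y) *\<^sub>R b"
    and "V3 \<equiv> (-3 * x * x1) *\<^sub>R t + (x2 - x * y^2 - x^3) *\<^sub>R n + (2 * x1 * y + x * y1) *\<^sub>R b"
    and "V5 \<equiv> (-10*x1*x2 - 5*x*x3 + 5*x*x1*y^2 + 5*x^2*y*y1 + 10*x^3*x1) *\<^sub>R t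
      + (x4 - 6*x2*y^2 - 12*x1*y*y1 - 3*x*y1^2 - 4*x*y*y2 + x*y^4
         - 15*x*x1^2 - 10*x^2*x2 + 2*x^3*y^2 + x^5) *\<^sub>R n
      + (4*x3*y + 6*x2*y1 + 4*x1*y2 - 4*x1*y^3 + x*y3
         - 6*x*y^2*y1 - 9*x^2*x1*y - x^3*y1) *\<^sub>R b"
    and "a \<equiv> r / 2 + 2 * (f^2 + fp)" and "l \<equiv> r / 2 + 3 * (f^2 + fp)"
    and "eT \<equiv> t \<bullet> xi" and "eN \<equiv> n \<bullet> xi" and "eB \<equiv> b \<bullet> xi"
  shows "V5 + kenmotsu_curv r f fp xi V3 t t - kenmotsu_curv r f fp xi V2 V1 t = 0
    \<longleftrightarrow> x*x3 + 2*x1*x2 - 2*x^3*x1 - y^2*x*x1 - x^2*y*y1 = 0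
      \<and> x4 - 10*x^2*x2 - 6*y^2*x2 - 4*x*y*y2 - 15*x*x1^2 - 12*y*y1*x1 - 3*x*y1^2
          + x^5 + x*y^4 + 2*x^3*y^2
          + (x2 - 2*x^3 - x*y^2) * (a - l * (eT^2 + eN^2))
          - (x^2*y*eT + (2*y*x1 + x*y1)*eN) * l * eB = 0
      \<and> 4*y*x3 + 6*x2*y1 + 4*x1*y2 - 9*x^2*y*x1 - 4*y^3*x1 - 6*x*y^2*y1 - y1*x^3 + x*y3
          + (2*x1*y + x*y1) * (a - l * (eT^2 + eB^2))
          + (x^2*y*eT - (x2 - 2*x^3 - x*y^2)*eB) * l * eN = 0"
    (is "?tension = 0 \<longleftrightarrow> ?E1 = 0 \<and> ?E2 = 0 \<and> ?E3 = 0")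
proof -
  have orthonormal': "n \<bullet> t = 0" "b \<bullet> t = 0" "b \<bullet> n = 0" "xi \<bullet> t = eT" "xi \<bullet> n = eN" "xi \<bullet> b = eB"
    using orthonormal by (simp_all add: eT_def eN_def eB_def inner_commute)
  note expand = V1_def V2_def V3_def V5_def a_def l_def kenmotsu_curv_def
    inner_add_left inner_diff_left inner_scaleR_left inner_minus_left
    orthonormal orthonormal' eT_def[symmetric] eN_def[symmetric] eB_def[symmetric]
  have components: "?tension \<bullet> t = -5 * ?E1" "?tension \<bullet> n = ?E2" "?tension \<bullet> b = ?E3"
    by (simp only: expand; simp add: algebra_simps eval_nat_numeral)+
  show ?thesis
    unfolding orthonormal_frame_eq_0_iff[OF orthonormal] components mult_eq_0_iff by simp
qed

theorem theorem1:
  fixes I :: "real set"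
    and T N B xi :: "real \<Rightarrow> real^3"
    and k1 k2 r f fp :: "real \<Rightarrow> real"
    and Rm :: "real \<Rightarrow> real^3 \<Rightarrow> real^3 \<Rightarrow> real^3 \<Rightarrow> real^3"
  assumes I: "open I" "is_interval I" "I \<noteq> {}"
    and smooth1: "\<And>n s. s \<in> I \<Longrightarrow> ((deriv^^n) k1 has_real_derivative (deriv^^(Suc n)) k1 s) (at s)"
    and smooth2: "\<And>n s. s \<in> I \<Longrightarrow> ((deriv^^n) k2 has_real_derivative (deriv^^(Suc n)) k2 s) (at s)"
    and nongeod: "\<And>s. s \<in> I \<Longrightarrow> k1 s > 0"
    and orth: "\<And>s. s \<in> I \<Longrightarrow> T s \<bullet> T s = 1 \<and> N s \<bullet> N s = 1 \<and> B s \<bullet> B s = 1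
                 \<and> T s \<bullet> N s = 0 \<and> T s \<bullet> B s = 0 \<and> N s \<bullet> B s = 0"
    and frenetT: "\<And>s. s \<in> I \<Longrightarrow> (T has_vector_derivative k1 s *\<^sub>R N s) (at s)"
    and frenetN: "\<And>s. s \<in> I \<Longrightarrow> (N has_vector_derivative (- k1 s *\<^sub>R T s + k2 s *\<^sub>R B s)) (at s)"
    and frenetB: "\<And>s. s \<in> I \<Longrightarrow> (B has_vector_derivative (- k2 s *\<^sub>R N s)) (at s)"
    and xi_unit: "\<And>s. s \<in> I \<Longrightarrow> xi s \<bullet> xi s = 1"
    and xi_deriv: "\<And>s. s \<in> I \<Longrightarrow>
          (xi has_vector_derivative f s *\<^sub>R (T s - (T s \<bullet> xi s) *\<^sub>R xi s)) (at s)"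
    and curv: "\<And>s X Y Z. s \<in> I \<Longrightarrow> Rm s X Y Z = kenmotsu_curv (r s) (f s) (fp s) (xi s) X Y Z"
  shows "triharmonic I T Rm \<longleftrightarrow>
    (\<forall>s\<in>I.
      let a = r s / 2 + 2 * ((f s)^2 + fp s);
          l = r s / 2 + 3 * ((f s)^2 + fp s);
          eT = T s \<bullet> xi s; eN = N s \<bullet> xi s; eB = B s \<bullet> xi s;
          x = k1 s; x1 = deriv k1 s; x2 = (deriv^^2) k1 s; x3 = (deriv^^3) k1 s;
          x4 = (deriv^^4) k1 s;
          y = k2 s; y1 = deriv k2 s; y2 = (deriv^^2) k2 s; y3 = (deriv^^3) k2 s
      in x*x3 + 2*x1*x2 - 2*x^3*x1 - y^2*x*x1 - x^2*y*y1 = 0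
       \<and> x4 - 10*x^2*x2 - 6*y^2*x2 - 4*x*y*y2 - 15*x*x1^2 - 12*y*y1*x1 - 3*x*y1^2
           + x^5 + x*y^4 + 2*x^3*y^2
           + (x2 - 2*x^3 - x*y^2) * (a - l * (eT^2 + eN^2))
           - (x^2*y*eT + (2*y*x1 + x*y1)*eN) * l * eB = 0
       \<and> 4*y*x3 + 6*x2*y1 + 4*x1*y2 - 9*x^2*y*x1 - 4*y^3*x1 - 6*x*y^2*y1 - y1*x^3 + x*y3
           + (2*x1*y + x*y1) * (a - l * (eT^2 + eB^2))
           + (x^2*y*eT - (x2 - 2*x^3 - x*y^2)*eB) * l * eN = 0)"
proof -
  interpret frenet_curve I T N B "\<lambda>j. (deriv^^j) k1" "\<lambda>j. (deriv^^j) k2"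
    by unfold_locales (simp_all only: funpow_0 I(1) smooth1 smooth2 frenetT frenetN frenetB)
  show ?thesis
    unfolding triharmonic_def
    apply (rule ball_cong[OF refl])
    subgoal premises s for s
      using kenmotsu_tension3_eq_0_iff[of "T s" "N s" "B s"] orth[OF s]
      unfolding curv[OF s] vd_T_1[OF s] vd_T_2[OF s] vd_T_3[OF s] vd_T_5[OF s] Let_def
      by simp
    done
qed

end
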